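(* For every $k\ge1$ there is $c>0$ such that the following holds. For every $n\ge k$ and every pair $w,u$ of functions from $[n]^{(k)}$ to $\mathbb{R}$, $$\mathbb{E}_\pi|\langle w_\pi,u\rangle| \ge c\, \gamma(w,u) \sqrt n,$$ where $\pi$ is a uniformly random permutation of $[n]$.
   Context: $[n]=\{1,\dots,n\}$; $V^{(k)}$ is the family of $k$-subsets of $V$; $\langle w,u\rangle=\sum_{e\in V^{(k)}}w(e)u(e)$; for a permutation $\pi$ of $V$, $w_\pi(e)=w(\pi^{-1}(e))$. Fix distinct $x,y\in V$ and let $\tau=(xy)$; then $\gamma(w,u)=\mathbb{E}_{\pi,\sigma}|\langle w_\pi,u_\sigma\rangle-\langle w_{\tau\pi},u_\sigma\rangle|$ with $\pi,\sigma$ independent uniformly random permutations of $V$ (this does not depend on the choice of $x,y$). *)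

theory Defs
  imports Complex_Main "HOL-Combinatorics.Permutations"
begin

definition ksubsets :: "'a set \<Rightarrow> nat \<Rightarrow> 'a set set" where
  "ksubsets V k = {e. e \<subseteq> V \<and> card e = k}"

definition inner_k :: "'a set \<Rightarrow> nat \<Rightarrow> ('a set \<Rightarrow> real) \<Rightarrow> ('a set \<Rightarrow> real) \<Rightarrow> real" where
  "inner_k V k w u = (\<Sum>e\<in>ksubsets V k. w e * u e)"

definition perm_act :: "('a \<Rightarrow> 'a) \<Rightarrow> ('a set \<Rightarrow> real) \<Rightarrow> ('a set \<Rightarrow> real)" where
  "perm_act p w = (\<lambda>e. w (inv p ` e))"

definition perms :: "'a set \<Rightarrow> ('a \<Rightarrow> 'a) set" where
  "perms V = {p. p permutes V}"

definition avg :: "'b set \<Rightarrow> ('b \<Rightarrow> real) \<Rightarrow> real" where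
  "avg S f = (\<Sum>s\<in>S. f s) / real (card S)"

definition gamma :: "'a set \<Rightarrow> nat \<Rightarrow> 'a \<Rightarrow> 'a \<Rightarrow> ('a set \<Rightarrow> real) \<Rightarrow> ('a set \<Rightarrow> real) \<Rightarrow> real" where
  "gamma V k x y w u =
     avg (perms V \<times> perms V)
       (\<lambda>(p, s). \<bar>inner_k V k (perm_act p w) (perm_act s u)
                 - inner_k V k (perm_act (transpose x y \<circ> p) w) (perm_act s u)\<bar>)"

end

(*
  Write Y q = inner_k V k (\<lambda>e. w (q ` e)) u.  The left-hand side is the average of |Y| over
  the symmetric group and gamma is the average of |Y (q o s) - Y (q o (x y) o s)|.

  Fix the m = n div 2 disjoint transpositions (2j+1 2j+2) and let R eps be the product of those
  selected by eps in {0,1}^m.  For fixed q and r, the function eps \<mapsto> Y (q o R eps o r) has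
  degree at most k on the cube: the term of a k-set e only depends on the pairs met by r ` e.
  For such f, Cauchy-Schwarz, the bound k * E f^2 on the total influence, and Bonami's lemma
  E f^4 <= 9^k (E f^2)^2 together with Hoelder (hence E f^2 <= 9^k (E |f|)^2) give
    sum_j E |f - f o flip_j| <= 2 * 3^k * sqrt (k m) * E |f|.
  Averaging over q and r, every edge term becomes gamma (all transpositions are conjugate)
  and every vertex term becomes E |Y|, so m * gamma <= 2 * 3^k * sqrt (k m) * E |Y|.
  Since n <= 4 m this gives the constant c = 1 / (4 * 3^k * sqrt k).
*)
theory Submission
  imports Defs "HOL-Analysis.Convex"
begin

section \<open>Functions of low degree on the Boolean cube\<close>

definition cube :: "nat \<Rightarrow> (nat \<Rightarrow> bool) set" where
  "cube m = {\<epsilon>. \<forall>i\<ge>m. \<not> \<epsilon> i}"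

definition flip :: "nat \<Rightarrow> (nat \<Rightarrow> bool) \<Rightarrow> (nat \<Rightarrow> bool)" where
  "flip j \<epsilon> = \<epsilon>(j := \<not> \<epsilon> j)"

lemma cube_0: "cube 0 = {\<lambda>_. False}"
  by (auto simp: cube_def)

lemma cube_Suc: "cube (Suc m) = cube m \<union> (\<lambda>\<epsilon>. \<epsilon>(m := True)) ` cube m"
proof (intro equalityI subsetI)
  fix \<epsilon> assume \<epsilon>: "\<epsilon> \<in> cube (Suc m)"
  show "\<epsilon> \<in> cube m \<union> (\<lambda>\<epsilon>. \<epsilon>(m := True)) ` cube m"
  proof (cases "\<epsilon> m")
    case True
    then have "\<epsilon> = (\<epsilon>(m := False))(m := True)" by (simp add: fun_eq_iff)
    moreover have "\<epsilon>(m := False) \<in> cube m" using \<epsilon> by (auto simp: cube_def)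
    ultimately show ?thesis by blast
  next
    case False
    have "\<not> \<epsilon> i" if "i \<ge> m" for i
      using \<epsilon> False that by (cases "i = m") (auto simp: cube_def)
    then have "\<epsilon> \<in> cube m" by (simp add: cube_def)
    then show ?thesis by blast
  qed
qed (auto simp: cube_def)

lemma finite_cube: "finite (cube m)"
  by (induction m) (auto simp: cube_0 cube_Suc)

lemma cube_upd_self: "\<epsilon> \<in> cube m \<Longrightarrow> \<epsilon>(m := False) = \<epsilon>"
  by (auto simp: cube_def fun_eq_iff)

lemma sum_cube_Suc:
  "(\<Sum>\<epsilon>\<in>cube (Suc m). h \<epsilon>) = (\<Sum>\<epsilon>\<in>cube m. h \<epsilon> + h (\<epsilon>(m := True)))"
proof -
  have "inj_on (\<lambda>\<epsilon>. \<epsilon>(m := True)) (cube m)"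
  proof (rule inj_onI)
    fix a b assume a: "a \<in> cube m" and b: "b \<in> cube m" and "a(m := True) = b(m := True)"
    then have "(a(m := True))(m := False) = (b(m := True))(m := False)" by simp
    then show "a = b" by (simp add: cube_upd_self[OF a] cube_upd_self[OF b])
  qed
  moreover have "cube m \<inter> (\<lambda>\<epsilon>. \<epsilon>(m := True)) ` cube m = {}"
    by (auto simp: cube_def)
  ultimately show ?thesis
    by (simp add: cube_Suc sum.union_disjoint finite_cube sum.reindex sum.distrib)
qed

lemma card_cube: "card (cube m) = 2 ^ m"
proof (induction m)
  case (Suc m)
  have "card (cube (Suc m)) = (\<Sum>\<epsilon>\<in>cube m. 1 + 1)"
    unfolding card_eq_sum by (rule sum_cube_Suc)
  with Suc show ?case by simp
qed (simp add: cube_0)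

lemma flip_fun_upd: "j \<noteq> m \<Longrightarrow> flip j (\<epsilon>(m := b)) = (flip j \<epsilon>)(m := b)"
  by (auto simp: flip_def fun_eq_iff)

lemma flip_top:
  assumes "\<epsilon> \<in> cube m"
  shows "flip m \<epsilon> = \<epsilon>(m := True)" and "flip m (\<epsilon>(m := True)) = \<epsilon>"
  using assms by (auto simp: flip_def cube_def fun_eq_iff)

definition depends_only_on :: "nat set \<Rightarrow> ((nat \<Rightarrow> bool) \<Rightarrow> real) \<Rightarrow> bool" where
  "depends_only_on J g \<longleftrightarrow> (\<forall>\<epsilon> \<epsilon>'. (\<forall>j\<in>J. \<epsilon> j = \<epsilon>' j) \<longrightarrow> g \<epsilon> = g \<epsilon>')"

lemma depends_only_onD:
  "depends_only_on J g \<Longrightarrow> (\<And>j. j \<in> J \<Longrightarrow> \<epsilon> j = \<epsilon>' j) \<Longrightarrow> g \<epsilon> = g \<epsilon>'"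
  by (simp add: depends_only_on_def)

text \<open>Sums of \<open>k\<close>-juntas, i.e. the functions of Fourier degree at most \<open>k\<close>.\<close>
inductive degree_le :: "nat \<Rightarrow> ((nat \<Rightarrow> bool) \<Rightarrow> real) \<Rightarrow> bool" for k where
  zero: "degree_le k (\<lambda>_. 0)"
| add_junta: "finite J \<Longrightarrow> card J \<le> k \<Longrightarrow> depends_only_on J g \<Longrightarrow> degree_le k f \<Longrightarrow>
    degree_le k (\<lambda>\<epsilon>. g \<epsilon> + f \<epsilon>)"

lemma degree_le_sum:
  assumes "finite I"
    and "\<And>i. i \<in> I \<Longrightarrow> finite (J i) \<and> card (J i) \<le> k \<and> depends_only_on (J i) (g i)"
  shows "degree_le k (\<lambda>\<epsilon>. \<Sum>i\<in>I. g i \<epsilon>)"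
  using assms
proof (induction I rule: finite_induct)
  case (insert i I)
  then have "degree_le k (\<lambda>\<epsilon>. g i \<epsilon> + (\<Sum>i\<in>I. g i \<epsilon>))"
    by (intro degree_le.add_junta[of "J i"]) auto
  with insert.hyps show ?case by simp
qed (simp add: degree_le.zero)

definition coord_mean :: "nat \<Rightarrow> ((nat \<Rightarrow> bool) \<Rightarrow> real) \<Rightarrow> (nat \<Rightarrow> bool) \<Rightarrow> real" where
  "coord_mean m f = (\<lambda>\<epsilon>. (f (\<epsilon>(m := False)) + f (\<epsilon>(m := True))) / 2)"

definition coord_deriv :: "nat \<Rightarrow> ((nat \<Rightarrow> bool) \<Rightarrow> real) \<Rightarrow> (nat \<Rightarrow> bool) \<Rightarrow> real" where
  "coord_deriv m f = (\<lambda>\<epsilon>. (f (\<epsilon>(m := True)) - f (\<epsilon>(m := False))) / 2)"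

lemma degree_le_coord_mean:
  assumes "degree_le k f"
  shows "degree_le k (coord_mean m f)"
  using assms
proof induction
  case zero
  then show ?case by (simp add: coord_mean_def degree_le.zero)
next
  case (add_junta J g f)
  have dep: "depends_only_on (J - {m}) (coord_mean m g)"
  proof (unfold depends_only_on_def, intro allI impI)
    fix \<epsilon> \<epsilon>' :: "nat \<Rightarrow> bool" assume "\<forall>j\<in>J - {m}. \<epsilon> j = \<epsilon>' j"
    then have "g (\<epsilon>(m := b)) = g (\<epsilon>'(m := b))" for b
      by (intro depends_only_onD[OF add_junta.hyps(3)]) auto
    then show "coord_mean m g \<epsilon> = coord_mean m g \<epsilon>'" by (simp add: coord_mean_def)
  qed
  have "finite (J - {m})" "card (J - {m}) \<le> k"
    using add_junta.hyps(1,2) by (auto intro: order_trans[OF card_Diff1_le])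
  then have "degree_le k (\<lambda>\<epsilon>. coord_mean m g \<epsilon> + coord_mean m f \<epsilon>)"
    using dep add_junta.IH by (rule degree_le.add_junta)
  moreover have "coord_mean m (\<lambda>\<epsilon>. g \<epsilon> + f \<epsilon>) = (\<lambda>\<epsilon>. coord_mean m g \<epsilon> + coord_mean m f \<epsilon>)"
    by (simp add: coord_mean_def fun_eq_iff add_divide_distrib)
  ultimately show ?case by simp
qed

lemma degree_le_coord_deriv:
  assumes "degree_le (Suc k) f"
  shows "degree_le k (coord_deriv m f)"
  using assms
proof induction
  case zero
  then show ?case by (simp add: coord_deriv_def degree_le.zero)
next
  case (add_junta J g f)
  define J' where "J' = (if m \<in> J then J - {m} else {})"
  have dep: "depends_only_on J' (coord_deriv m g)"
  proof (cases "m \<in> J")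
    case True
    show ?thesis
    proof (unfold depends_only_on_def, intro allI impI)
      fix \<epsilon> \<epsilon>' :: "nat \<Rightarrow> bool" assume "\<forall>j\<in>J'. \<epsilon> j = \<epsilon>' j"
      then have "g (\<epsilon>(m := b)) = g (\<epsilon>'(m := b))" for b
        using True by (intro depends_only_onD[OF add_junta.hyps(3)]) (auto simp: J'_def)
      then show "coord_deriv m g \<epsilon> = coord_deriv m g \<epsilon>'" by (simp add: coord_deriv_def)
    qed
  next
    case False
    then have "g (\<epsilon>(m := True)) = g (\<epsilon>(m := False))" for \<epsilon>
      using False by (intro depends_only_onD[OF add_junta.hyps(3)]) auto
    then show ?thesis by (simp add: depends_only_on_def coord_deriv_def)
  qed
  have "finite J'" "card J' \<le> k"
    using add_junta.hyps(1,2) by (auto simp: J'_def)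
  then have "degree_le k (\<lambda>\<epsilon>. coord_deriv m g \<epsilon> + coord_deriv m f \<epsilon>)"
    using dep add_junta.IH by (rule degree_le.add_junta)
  moreover have "coord_deriv m (\<lambda>\<epsilon>. g \<epsilon> + f \<epsilon>) = (\<lambda>\<epsilon>. coord_deriv m g \<epsilon> + coord_deriv m f \<epsilon>)"
    by (simp add: coord_deriv_def fun_eq_iff field_simps)
  ultimately show ?case by simp
qed

lemma degree_le_0_coord_deriv:
  assumes "degree_le 0 f"
  shows "coord_deriv m f = (\<lambda>_. 0)"
  using assms
proof induction
  case (add_junta J g f)
  then have "g (\<epsilon>(m := True)) = g (\<epsilon>(m := False))" for \<epsilon>
    by (simp add: depends_only_on_def)
  then show ?case using add_junta.IH by (simp add: coord_deriv_def fun_eq_iff)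
qed (simp add: coord_deriv_def)

lemma cube_Suc_mean_deriv:
  assumes "\<epsilon> \<in> cube m"
  shows "f \<epsilon> = coord_mean m f \<epsilon> - coord_deriv m f \<epsilon>"
    and "f (\<epsilon>(m := True)) = coord_mean m f \<epsilon> + coord_deriv m f \<epsilon>"
  using cube_upd_self[OF assms] by (simp_all add: coord_mean_def coord_deriv_def field_simps)

lemma sum_cube_Suc_mean_deriv:
  "(\<Sum>\<epsilon>\<in>cube (Suc m). h (f \<epsilon>)) =
     (\<Sum>\<epsilon>\<in>cube m. h (coord_mean m f \<epsilon> - coord_deriv m f \<epsilon>) + h (coord_mean m f \<epsilon> + coord_deriv m f \<epsilon>))"
  unfolding sum_cube_Suc by (rule sum.cong) (simp_all flip: cube_Suc_mean_deriv)

lemma sum_cube_Suc_power2: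
  "(\<Sum>\<epsilon>\<in>cube (Suc m). (f \<epsilon>)\<^sup>2) =
     2 * (\<Sum>\<epsilon>\<in>cube m. (coord_mean m f \<epsilon>)\<^sup>2) + 2 * (\<Sum>\<epsilon>\<in>cube m. (coord_deriv m f \<epsilon>)\<^sup>2)"
  unfolding sum_cube_Suc_mean_deriv[where h="\<lambda>x. x\<^sup>2"]
  by (simp add: power2_eq_square algebra_simps sum.distrib sum_distrib_left)

lemma sum_cube_Suc_power4:
  "(\<Sum>\<epsilon>\<in>cube (Suc m). (f \<epsilon>) ^ 4) =
     2 * (\<Sum>\<epsilon>\<in>cube m. (coord_mean m f \<epsilon>) ^ 4)
     + 12 * (\<Sum>\<epsilon>\<in>cube m. (coord_mean m f \<epsilon>)\<^sup>2 * (coord_deriv m f \<epsilon>)\<^sup>2)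
     + 2 * (\<Sum>\<epsilon>\<in>cube m. (coord_deriv m f \<epsilon>) ^ 4)"
  unfolding sum_cube_Suc_mean_deriv[where h="\<lambda>x. x ^ 4"]
  by (simp add: power4_eq_xxxx power2_eq_square algebra_simps sum.distrib sum_distrib_left)

lemma bonami_step:
  fixes N Q a b c d e :: real
  assumes "N * c \<le> 9 * Q * a\<^sup>2" and "N * d \<le> Q * b\<^sup>2" and "e\<^sup>2 \<le> c * d"
    and "N \<ge> 0" "Q \<ge> 0" "a \<ge> 0" "b \<ge> 0" "c \<ge> 0" "d \<ge> 0" "e \<ge> 0"
  shows "N * (c + 6 * e + d) \<le> 9 * Q * (a + b)\<^sup>2"
proof -
  have "(N * e)\<^sup>2 = N\<^sup>2 * e\<^sup>2"
    by (simp add: power_mult_distrib)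
  also have "\<dots> \<le> N\<^sup>2 * (c * d)"
    using assms(3) by (simp add: mult_left_mono)
  also have "\<dots> = (N * c) * (N * d)"
    by (simp add: power2_eq_square ac_simps)
  also have "\<dots> \<le> (9 * Q * a\<^sup>2) * (Q * b\<^sup>2)"
    by (rule mult_mono[OF assms(1,2)]) (use assms in simp_all)
  also have "\<dots> = (3 * Q * a * b)\<^sup>2"
    by (simp add: power2_eq_square)
  finally have "N * e \<le> 3 * Q * a * b"
    by (rule power2_le_imp_le) (use assms in simp)
  have "9 * Q * (a + b)\<^sup>2 = 9 * Q * a\<^sup>2 + 6 * (3 * Q * a * b) + Q * b\<^sup>2 + 8 * (Q * b\<^sup>2)"
    by (simp add: power2_eq_square algebra_simps)
  moreover have "Q * b\<^sup>2 \<ge> 0"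
    using assms by simp
  ultimately show ?thesis
    using assms(1,2) \<open>N * e \<le> 3 * Q * a * b\<close> by (simp add: distrib_left)
qed

theorem bonami_lemma:
  assumes "degree_le k f"
  shows "2 ^ m * (\<Sum>\<epsilon>\<in>cube m. (f \<epsilon>) ^ 4) \<le> 9 ^ k * (\<Sum>\<epsilon>\<in>cube m. (f \<epsilon>)\<^sup>2)\<^sup>2"
  using assms
proof (induction m arbitrary: k f)
  case 0
  have "(f (\<lambda>_. False)) ^ 4 \<le> 9 ^ k * ((f (\<lambda>_. False))\<^sup>2)\<^sup>2"
    by (simp add: mult_le_cancel_right1 flip: power_mult)
  then show ?case by (simp add: cube_0)
next
  case (Suc m)
  let ?A = "coord_mean m f" and ?B = "coord_deriv m f"
  define a2 where "a2 = (\<Sum>\<epsilon>\<in>cube m. (?A \<epsilon>)\<^sup>2)"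
  define b2 where "b2 = (\<Sum>\<epsilon>\<in>cube m. (?B \<epsilon>)\<^sup>2)"
  define a4 where "a4 = (\<Sum>\<epsilon>\<in>cube m. (?A \<epsilon>) ^ 4)"
  define b4 where "b4 = (\<Sum>\<epsilon>\<in>cube m. (?B \<epsilon>) ^ 4)"
  define ab where "ab = (\<Sum>\<epsilon>\<in>cube m. (?A \<epsilon>)\<^sup>2 * (?B \<epsilon>)\<^sup>2)"
  have IH_A: "2 ^ m * a4 \<le> 9 ^ k * a2\<^sup>2"
    unfolding a4_def a2_def by (rule Suc.IH[OF degree_le_coord_mean[OF Suc.prems]])
  have step: "2 ^ m * (a4 + 6 * ab + b4) \<le> 9 ^ k * (a2 + b2)\<^sup>2"
  proof (cases k)
    case 0
    then have "?B = (\<lambda>_. 0)" using Suc.prems by (simp add: degree_le_0_coord_deriv)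
    then show ?thesis using IH_A by (simp add: ab_def b2_def b4_def)
  next
    case (Suc k')
    have "2 ^ m * b4 \<le> 9 ^ k' * b2\<^sup>2"
      unfolding b4_def b2_def
      by (rule Suc.IH[OF degree_le_coord_deriv]) (use Suc.prems \<open>k = Suc k'\<close> in simp)
    moreover have "ab\<^sup>2 \<le> a4 * b4"
      using Cauchy_Schwarz_ineq_sum[where a="\<lambda>\<epsilon>. (?A \<epsilon>)\<^sup>2" and b="\<lambda>\<epsilon>. (?B \<epsilon>)\<^sup>2" and I="cube m"]
      by (simp add: ab_def a4_def b4_def flip: power_mult)
    moreover have "(9::real) ^ k = 9 * 9 ^ k'"
      using \<open>k = Suc k'\<close> by simp
    ultimately show ?thesis
      using IH_A bonami_step[where N="2 ^ m" and Q="9 ^ k'" and a=a2 and b=b2 and c=a4 and d=b4 and e=ab]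
      by (simp add: a2_def b2_def a4_def b4_def ab_def sum_nonneg)
  qed
  have "2 ^ Suc m * (\<Sum>\<epsilon>\<in>cube (Suc m). (f \<epsilon>) ^ 4) = 4 * (2 ^ m * (a4 + 6 * ab + b4))"
    by (simp add: sum_cube_Suc_power4 a4_def b4_def ab_def algebra_simps)
  also have "\<dots> \<le> 4 * (9 ^ k * (a2 + b2)\<^sup>2)"
    using step by simp
  also have "\<dots> = 9 ^ k * (\<Sum>\<epsilon>\<in>cube (Suc m). (f \<epsilon>)\<^sup>2)\<^sup>2"
    unfolding sum_cube_Suc_power2 a2_def[symmetric] b2_def[symmetric]
    by (simp add: power2_eq_square algebra_simps)
  finally show ?case .
qed

text \<open>Unnormalised: \<open>4 * 2 ^ m\<close> times the usual total influence.\<close>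
definition total_influence :: "nat \<Rightarrow> ((nat \<Rightarrow> bool) \<Rightarrow> real) \<Rightarrow> real" where
  "total_influence m f = (\<Sum>j<m. \<Sum>\<epsilon>\<in>cube m. (f \<epsilon> - f (flip j \<epsilon>))\<^sup>2)"

lemma coord_mean_deriv_flip:
  assumes "j \<noteq> m"
  shows "coord_mean m (\<lambda>\<epsilon>. f \<epsilon> - f (flip j \<epsilon>)) = (\<lambda>\<epsilon>. coord_mean m f \<epsilon> - coord_mean m f (flip j \<epsilon>))"
    and "coord_deriv m (\<lambda>\<epsilon>. f \<epsilon> - f (flip j \<epsilon>)) = (\<lambda>\<epsilon>. coord_deriv m f \<epsilon> - coord_deriv m f (flip j \<epsilon>))"
  using assms by (simp_all add: coord_mean_def coord_deriv_def flip_fun_upd fun_eq_iff field_simps)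

lemma total_influence_Suc:
  "total_influence (Suc m) f =
     2 * total_influence m (coord_mean m f) + 2 * total_influence m (coord_deriv m f)
     + 8 * (\<Sum>\<epsilon>\<in>cube m. (coord_deriv m f \<epsilon>)\<^sup>2)"
proof -
  have lower: "(\<Sum>\<epsilon>\<in>cube (Suc m). (f \<epsilon> - f (flip j \<epsilon>))\<^sup>2) =
      2 * (\<Sum>\<epsilon>\<in>cube m. (coord_mean m f \<epsilon> - coord_mean m f (flip j \<epsilon>))\<^sup>2)
      + 2 * (\<Sum>\<epsilon>\<in>cube m. (coord_deriv m f \<epsilon> - coord_deriv m f (flip j \<epsilon>))\<^sup>2)" if "j < m" for j
    using sum_cube_Suc_power2[where m=m and f="\<lambda>\<epsilon>. f \<epsilon> - f (flip j \<epsilon>)"] that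
    by (simp only: coord_mean_deriv_flip less_irrefl_nat)
  have top: "(\<Sum>\<epsilon>\<in>cube (Suc m). (f \<epsilon> - f (flip m \<epsilon>))\<^sup>2) = 8 * (\<Sum>\<epsilon>\<in>cube m. (coord_deriv m f \<epsilon>)\<^sup>2)"
    unfolding sum_cube_Suc sum_distrib_left
  proof (rule sum.cong)
    fix \<epsilon> assume "\<epsilon> \<in> cube m"
    note split = cube_Suc_mean_deriv[OF this, of f]
    show "(f \<epsilon> - f (flip m \<epsilon>))\<^sup>2 + (f (\<epsilon>(m := True)) - f (flip m (\<epsilon>(m := True))))\<^sup>2 =
        8 * (coord_deriv m f \<epsilon>)\<^sup>2"
      unfolding flip_top[OF \<open>\<epsilon> \<in> cube m\<close>] split by (simp add: power2_eq_square)
  qed simp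
  show ?thesis
    by (simp add: total_influence_def lower top sum.distrib sum_distrib_left)
qed

theorem total_influence_le:
  assumes "degree_le k f"
  shows "total_influence m f \<le> 4 * real k * (\<Sum>\<epsilon>\<in>cube m. (f \<epsilon>)\<^sup>2)"
  using assms
proof (induction m arbitrary: k f)
  case 0
  then show ?case by (simp add: total_influence_def sum_nonneg)
next
  case (Suc m)
  let ?A = "coord_mean m f" and ?B = "coord_deriv m f"
  define a2 where "a2 = (\<Sum>\<epsilon>\<in>cube m. (?A \<epsilon>)\<^sup>2)"
  define b2 where "b2 = (\<Sum>\<epsilon>\<in>cube m. (?B \<epsilon>)\<^sup>2)"
  have IH_A: "total_influence m ?A \<le> 4 * real k * a2"
    unfolding a2_def by (rule Suc.IH[OF degree_le_coord_mean[OF Suc.prems]])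
  have "2 * total_influence m ?A + 2 * total_influence m ?B + 8 * b2 \<le> 4 * real k * (2 * a2 + 2 * b2)"
  proof (cases k)
    case 0
    then have "?B = (\<lambda>_. 0)" using Suc.prems by (simp add: degree_le_0_coord_deriv)
    then show ?thesis using IH_A \<open>k = 0\<close> by (simp add: b2_def total_influence_def)
  next
    case (Suc k')
    have "total_influence m ?B \<le> 4 * real k' * b2"
      unfolding b2_def
      by (rule Suc.IH[OF degree_le_coord_deriv]) (use Suc.prems \<open>k = Suc k'\<close> in simp)
    then show ?thesis using IH_A \<open>k = Suc k'\<close> by (simp add: algebra_simps)
  qed
  then show ?case by (simp add: total_influence_Suc sum_cube_Suc_power2 a2_def b2_def)
qed

lemma sum_power2_cube_le:
  fixes f :: "'a \<Rightarrow> real"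
  shows "(\<Sum>x\<in>S. (f x)\<^sup>2) ^ 3 \<le> (\<Sum>x\<in>S. \<bar>f x\<bar>)\<^sup>2 * (\<Sum>x\<in>S. (f x) ^ 4)"
proof -
  define S1 where "S1 = (\<Sum>x\<in>S. \<bar>f x\<bar>)"
  define S2 where "S2 = (\<Sum>x\<in>S. (f x)\<^sup>2)"
  define S3 where "S3 = (\<Sum>x\<in>S. \<bar>f x\<bar> ^ 3)"
  define S4 where "S4 = (\<Sum>x\<in>S. (f x) ^ 4)"
  have nonneg: "S1 \<ge> 0" "S2 \<ge> 0" "S4 \<ge> 0"
    by (simp_all add: S1_def S2_def S4_def sum_nonneg)
  have "sqrt \<bar>t\<bar> * (sqrt \<bar>t\<bar> * \<bar>t\<bar>) = t\<^sup>2" for t :: real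
    by (subst mult.assoc[symmetric]) (simp add: power2_eq_square)
  then have "S2 = (\<Sum>x\<in>S. sqrt \<bar>f x\<bar> * (sqrt \<bar>f x\<bar> * \<bar>f x\<bar>))"
    by (simp add: S2_def)
  then have "S2\<^sup>2 \<le> (\<Sum>x\<in>S. (sqrt \<bar>f x\<bar>)\<^sup>2) * (\<Sum>x\<in>S. (sqrt \<bar>f x\<bar> * \<bar>f x\<bar>)\<^sup>2)"
    by (simp only: Cauchy_Schwarz_ineq_sum)
  also have "(\<Sum>x\<in>S. (sqrt \<bar>f x\<bar>)\<^sup>2) = S1"
    by (simp add: S1_def)
  also have "(sqrt \<bar>t\<bar> * \<bar>t\<bar>)\<^sup>2 = \<bar>t\<bar> ^ 3" for t :: real
    by (simp add: power_mult_distrib power3_eq_cube power2_eq_square algebra_simps)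
  then have "(\<Sum>x\<in>S. (sqrt \<bar>f x\<bar> * \<bar>f x\<bar>)\<^sup>2) = S3"
    by (simp add: S3_def)
  finally have S2_S1_S3: "S2\<^sup>2 \<le> S1 * S3" .
  have "S3 = (\<Sum>x\<in>S. \<bar>f x\<bar> * (f x)\<^sup>2)"
    unfolding S3_def by (rule sum.cong) (simp_all add: power2_eq_square power3_eq_cube)
  then have "S3\<^sup>2 \<le> (\<Sum>x\<in>S. \<bar>f x\<bar>\<^sup>2) * (\<Sum>x\<in>S. ((f x)\<^sup>2)\<^sup>2)"
    by (simp only: Cauchy_Schwarz_ineq_sum)
  also have "\<dots> = S2 * S4"
    by (simp add: S2_def S4_def flip: power_mult)
  finally have S3_S2_S4: "S3\<^sup>2 \<le> S2 * S4" .
  have "S2 * S2 ^ 3 = (S2\<^sup>2)\<^sup>2"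
    by (simp add: power2_eq_square power3_eq_cube)
  also have "\<dots> \<le> (S1 * S3)\<^sup>2"
    by (rule power_mono[OF S2_S1_S3]) (simp add: nonneg)
  also have "\<dots> = S1\<^sup>2 * S3\<^sup>2"
    by (simp add: power_mult_distrib)
  also have "\<dots> \<le> S1\<^sup>2 * (S2 * S4)"
    using S3_S2_S4 by (simp add: mult_left_mono)
  also have "\<dots> = S2 * (S1\<^sup>2 * S4)"
    by simp
  finally have "S2 * S2 ^ 3 \<le> S2 * (S1\<^sup>2 * S4)" .
  then have "S2 ^ 3 \<le> S1\<^sup>2 * S4"
    using nonneg by (cases "S2 = 0") simp_all
  then show ?thesis
    by (simp add: S1_def S2_def S4_def)
qed

lemma degree_le_sum_power2_le:
  assumes "degree_le k f"
  shows "2 ^ m * (\<Sum>\<epsilon>\<in>cube m. (f \<epsilon>)\<^sup>2) \<le> 9 ^ k * (\<Sum>\<epsilon>\<in>cube m. \<bar>f \<epsilon>\<bar>)\<^sup>2"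
proof -
  define S1 where "S1 = (\<Sum>\<epsilon>\<in>cube m. \<bar>f \<epsilon>\<bar>)"
  define S2 where "S2 = (\<Sum>\<epsilon>\<in>cube m. (f \<epsilon>)\<^sup>2)"
  define S4 where "S4 = (\<Sum>\<epsilon>\<in>cube m. (f \<epsilon>) ^ 4)"
  have "S2\<^sup>2 * (2 ^ m * S2) = 2 ^ m * S2 ^ 3"
    by (simp add: power2_eq_square power3_eq_cube)
  also have "\<dots> \<le> 2 ^ m * (S1\<^sup>2 * S4)"
    unfolding S1_def S2_def S4_def by (simp add: sum_power2_cube_le)
  also have "\<dots> = S1\<^sup>2 * (2 ^ m * S4)"
    by simp
  also have "\<dots> \<le> S1\<^sup>2 * (9 ^ k * S2\<^sup>2)"
    unfolding S2_def S4_def by (rule mult_left_mono[OF bonami_lemma[OF assms]]) simp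
  also have "\<dots> = S2\<^sup>2 * (9 ^ k * S1\<^sup>2)"
    by simp
  finally have "S2\<^sup>2 * (2 ^ m * S2) \<le> S2\<^sup>2 * (9 ^ k * S1\<^sup>2)" .
  then show ?thesis
    by (cases "S2 = 0") (simp_all add: S1_def S2_def)
qed

theorem sum_abs_flip_diff_le:
  assumes "degree_le k f"
  shows "(\<Sum>j<m. \<Sum>\<epsilon>\<in>cube m. \<bar>f \<epsilon> - f (flip j \<epsilon>)\<bar>)
           \<le> 2 * 3 ^ k * sqrt (real k * real m) * (\<Sum>\<epsilon>\<in>cube m. \<bar>f \<epsilon>\<bar>)"
proof -
  define L where "L = (\<Sum>j<m. \<Sum>\<epsilon>\<in>cube m. \<bar>f \<epsilon> - f (flip j \<epsilon>)\<bar>)"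
  define S1 where "S1 = (\<Sum>\<epsilon>\<in>cube m. \<bar>f \<epsilon>\<bar>)"
  define S2 where "S2 = (\<Sum>\<epsilon>\<in>cube m. (f \<epsilon>)\<^sup>2)"
  let ?E = "{..<m} \<times> cube m"
  have "L = (\<Sum>(j, \<epsilon>)\<in>?E. 1 * \<bar>f \<epsilon> - f (flip j \<epsilon>)\<bar>)"
    by (simp add: L_def sum.cartesian_product)
  then have "L\<^sup>2 \<le> (\<Sum>(j, \<epsilon>)\<in>?E. 1\<^sup>2) * (\<Sum>(j, \<epsilon>)\<in>?E. \<bar>f \<epsilon> - f (flip j \<epsilon>)\<bar>\<^sup>2)"
    using Cauchy_Schwarz_ineq_sum[where a="\<lambda>_. 1" and b="\<lambda>(j, \<epsilon>). \<bar>f \<epsilon> - f (flip j \<epsilon>)\<bar>" and I="?E"]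
    by (simp add: case_prod_unfold)
  also have "\<dots> = real m * 2 ^ m * total_influence m f"
    by (simp add: total_influence_def sum.cartesian_product card_cartesian_product card_cube)
  also have "\<dots> \<le> real m * 2 ^ m * (4 * real k * S2)"
    unfolding S2_def by (rule mult_left_mono[OF total_influence_le[OF assms]]) simp
  also have "\<dots> = 4 * real k * real m * (2 ^ m * S2)"
    by simp
  also have "\<dots> \<le> 4 * real k * real m * (9 ^ k * S1\<^sup>2)"
    unfolding S1_def S2_def by (rule mult_left_mono[OF degree_le_sum_power2_le[OF assms]]) simp
  also have "\<dots> = (2 * 3 ^ k * sqrt (real k * real m) * S1)\<^sup>2"
    using power_mult[of "3::real" k 2] power_mult[of "3::real" 2 k]
    by (simp add: power_mult_distrib mult.commute)
  finally have "L\<^sup>2 \<le> (2 * 3 ^ k * sqrt (real k * real m) * S1)\<^sup>2" .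
  then show ?thesis
    unfolding L_def S1_def by (rule power2_le_imp_le) (simp add: sum_nonneg)
qed

section \<open>Averages over permutations\<close>

lemma avg_cong: "(\<And>x. x \<in> S \<Longrightarrow> f x = g x) \<Longrightarrow> avg S f = avg S g"
  by (simp add: avg_def)

lemma avg_mono: "(\<And>x. x \<in> S \<Longrightarrow> f x \<le> g x) \<Longrightarrow> avg S f \<le> avg S g"
  by (simp add: avg_def divide_right_mono sum_mono)

lemma avg_nonneg: "(\<And>x. x \<in> S \<Longrightarrow> 0 \<le> f x) \<Longrightarrow> 0 \<le> avg S f"
  by (simp add: avg_def sum_nonneg)

lemma avg_sum: "avg S (\<lambda>x. \<Sum>i\<in>I. f i x) = (\<Sum>i\<in>I. avg S (f i))"
  by (simp add: avg_def sum_divide_distrib sum.swap[of _ I])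

lemma avg_mult_left: "avg S (\<lambda>x. c * f x) = c * avg S f"
  by (simp add: avg_def sum_distrib_left)

lemma avg_const: "finite S \<Longrightarrow> S \<noteq> {} \<Longrightarrow> avg S (\<lambda>_. c) = c"
  by (simp add: avg_def)

lemma avg_Times: "avg (A \<times> B) (\<lambda>(a, b). f a b) = avg A (\<lambda>a. avg B (f a))"
proof -
  have "(\<Sum>(a, b)\<in>A \<times> B. f a b) = (\<Sum>a\<in>A. \<Sum>b\<in>B. f a b)"
    by (simp add: sum.cartesian_product)
  then show ?thesis
    by (simp add: avg_def card_cartesian_product divide_divide_eq_left mult.commute
        flip: sum_divide_distrib)
qed

lemma avg_perms_compose_left: "q permutes V \<Longrightarrow> avg (perms V) (\<lambda>p. f (q \<circ> p)) = avg (perms V) f"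
  by (simp add: avg_def perms_def flip: setum_permutations_compose_left)

lemma avg_perms_compose_right: "q permutes V \<Longrightarrow> avg (perms V) (\<lambda>p. f (p \<circ> q)) = avg (perms V) f"
  by (simp add: avg_def perms_def flip: sum_permutations_compose_right)

lemma avg_perms_inv: "avg (perms V) (\<lambda>p. f (inv p)) = avg (perms V) f"
  by (simp add: avg_def perms_def flip: sum_permutations_inverse)

lemma finite_ksubsets: "finite V \<Longrightarrow> finite (ksubsets V k)"
  unfolding ksubsets_def by (rule finite_subset[of _ "Pow V"]) auto

lemma image_ksubsets_permutes:
  assumes "p permutes V"
  shows "(`) p ` ksubsets V k \<subseteq> ksubsets V k"
proof
  fix e' assume "e' \<in> (`) p ` ksubsets V k"
  then obtain e where e: "e \<subseteq> V" "card e = k" and e': "e' = p ` e"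
    by (auto simp: ksubsets_def)
  have "card (p ` e) = card e"
    using permutes_inj[OF assms] by (simp add: card_image inj_on_subset)
  moreover have "p ` e \<subseteq> V"
    using e(1) permutes_image[OF assms] by blast
  ultimately show "e' \<in> ksubsets V k"
    using e e' by (simp add: ksubsets_def)
qed

lemma bij_betw_image_ksubsets:
  assumes "p permutes V"
  shows "bij_betw ((`) p) (ksubsets V k) (ksubsets V k)"
proof (rule bij_betw_byWitness[where f'="(`) (inv p)"])
  show "\<forall>e\<in>ksubsets V k. inv p ` p ` e = e" "\<forall>e\<in>ksubsets V k. p ` inv p ` e = e"
    by (simp_all add: image_comp permutes_inv_o[OF assms])
qed (simp_all add: image_ksubsets_permutes assms permutes_inv)

definition perm_corr :: "'a set \<Rightarrow> nat \<Rightarrow> ('a set \<Rightarrow> real) \<Rightarrow> ('a set \<Rightarrow> real) \<Rightarrow> ('a \<Rightarrow> 'a) \<Rightarrow> real" where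
  "perm_corr V k w u q = inner_k V k (\<lambda>e. w (q ` e)) u"

lemma inner_k_perm_act:
  assumes "p permutes V" "s permutes V"
  shows "inner_k V k (perm_act p w) (perm_act s u) = perm_corr V k w u (inv p \<circ> s)"
proof -
  have "inner_k V k (perm_act p w) (perm_act s u)
      = (\<Sum>e\<in>ksubsets V k. w (inv p ` s ` e) * u (inv s ` s ` e))"
    unfolding inner_k_def perm_act_def
    by (rule sum.reindex_bij_betw[OF bij_betw_image_ksubsets[OF assms(2)], symmetric])
  then show ?thesis
    by (simp add: perm_corr_def inner_k_def image_comp permutes_inv_o[OF assms(2)])
qed

lemma avg_abs_inner_k_perm_act:
  "avg (perms V) (\<lambda>p. \<bar>inner_k V k (perm_act p w) u\<bar>) = avg (perms V) (\<lambda>q. \<bar>perm_corr V k w u q\<bar>)"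
proof -
  have "perm_act id u = u"
    by (simp add: perm_act_def)
  then have "inner_k V k (perm_act p w) u = perm_corr V k w u (inv p)" if "p \<in> perms V" for p
    using inner_k_perm_act[where p=p and V=V and s=id and k=k and w=w and u=u] that
    by (simp add: perms_def permutes_id)
  then have "avg (perms V) (\<lambda>p. \<bar>inner_k V k (perm_act p w) u\<bar>)
      = avg (perms V) (\<lambda>p. \<bar>perm_corr V k w u (inv p)\<bar>)"
    by (intro avg_cong) simp
  also have "\<dots> = avg (perms V) (\<lambda>q. \<bar>perm_corr V k w u q\<bar>)"
    by (rule avg_perms_inv)
  finally show ?thesis .
qed

lemma gamma_eq_avg_perm_corr:
  assumes "x \<in> V" "y \<in> V"
  shows "gamma V k x y w u = avg (perms V) (\<lambda>q. avg (perms V) (\<lambda>s.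
           \<bar>perm_corr V k w u (q \<circ> s) - perm_corr V k w u (q \<circ> transpose x y \<circ> s)\<bar>))"
proof -
  let ?Y = "perm_corr V k w u"
  let ?F = "\<lambda>q. avg (perms V) (\<lambda>s. \<bar>?Y (q \<circ> s) - ?Y (q \<circ> transpose x y \<circ> s)\<bar>)"
  have "gamma V k x y w u = avg (perms V) (\<lambda>p. avg (perms V) (\<lambda>s.
          \<bar>?Y (inv p \<circ> s) - ?Y (inv p \<circ> transpose x y \<circ> s)\<bar>))"
    unfolding gamma_def avg_Times
  proof (intro avg_cong)
    fix p s assume "p \<in> perms V" "s \<in> perms V"
    then have p: "p permutes V" and s: "s permutes V"
      by (simp_all add: perms_def)
    have "transpose x y \<circ> p permutes V"
      using p assms by (simp add: permutes_compose permutes_swap_id)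
    moreover have "inv (transpose x y \<circ> p) = inv p \<circ> transpose x y"
      using p by (simp add: o_inv_distrib permutes_bij)
    ultimately show "\<bar>inner_k V k (perm_act p w) (perm_act s u)
          - inner_k V k (perm_act (transpose x y \<circ> p) w) (perm_act s u)\<bar>
        = \<bar>?Y (inv p \<circ> s) - ?Y (inv p \<circ> transpose x y \<circ> s)\<bar>"
      using inner_k_perm_act[OF p s] inner_k_perm_act[OF _ s] by simp
  qed
  then show ?thesis
    by (simp only: avg_perms_inv[where f="?F"])
qed

lemma gamma_nonneg: "gamma V k x y w u \<ge> 0"
  unfolding gamma_def by (rule avg_nonneg) auto

lemma gamma_conj_invariant:
  assumes "q0 permutes V" "x \<in> V" "y \<in> V"
  shows "gamma V k (q0 x) (q0 y) w u = gamma V k x y w u"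
proof -
  let ?Y = "perm_corr V k w u"
  let ?F = "\<lambda>q. avg (perms V) (\<lambda>s. \<bar>?Y (q \<circ> s) - ?Y (q \<circ> transpose x y \<circ> s)\<bar>)"
  have "transpose (q0 x) (q0 y) \<circ> q0 = q0 \<circ> transpose x y"
    using transpose_comp_eq[of q0 "q0 x" "q0 y"] permutes_bij[OF assms(1)]
    by (simp add: permutes_inverses(2)[OF assms(1)])
  then have conj: "transpose (q0 x) (q0 y) \<circ> (q0 \<circ> s) = q0 \<circ> (transpose x y \<circ> s)" for s
    by (simp flip: comp_assoc)
  have "avg (perms V) (\<lambda>s. \<bar>?Y (q \<circ> s) - ?Y (q \<circ> transpose (q0 x) (q0 y) \<circ> s)\<bar>) = ?F (q \<circ> q0)" for q
  proof -
    have "avg (perms V) (\<lambda>s. \<bar>?Y (q \<circ> s) - ?Y (q \<circ> transpose (q0 x) (q0 y) \<circ> s)\<bar>)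
        = avg (perms V) (\<lambda>s. \<bar>?Y (q \<circ> (q0 \<circ> s)) - ?Y (q \<circ> transpose (q0 x) (q0 y) \<circ> (q0 \<circ> s))\<bar>)"
      by (rule avg_perms_compose_left[OF assms(1), symmetric])
    also have "\<dots> = ?F (q \<circ> q0)"
      by (simp add: comp_assoc conj)
    finally show ?thesis .
  qed
  then have "gamma V k (q0 x) (q0 y) w u = avg (perms V) (\<lambda>q. ?F (q \<circ> q0))"
    using assms by (simp add: gamma_eq_avg_perm_corr permutes_in_image)
  also have "\<dots> = avg (perms V) ?F"
    by (rule avg_perms_compose_right[OF assms(1)])
  also have "\<dots> = gamma V k x y w u"
    using assms by (simp add: gamma_eq_avg_perm_corr)
  finally show ?thesis .
qed

lemma permutes_map_pair:
  assumes "a \<in> V" "b \<in> V" "x \<in> V" "y \<in> V" "a \<noteq> b" "x \<noteq> y"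
  obtains q where "q permutes V" "q a = x" "q b = y"
proof
  let ?b' = "transpose a x b"
  show "transpose ?b' y \<circ> transpose a x permutes V"
    using assms by (intro permutes_compose permutes_swap_id) (auto simp: transpose_def)
  show "(transpose ?b' y \<circ> transpose a x) a = x"
    using assms by (auto simp: transpose_def)
  show "(transpose ?b' y \<circ> transpose a x) b = y"
    by simp
qed

lemma gamma_independent:
  assumes "a \<in> V" "b \<in> V" "x \<in> V" "y \<in> V" "a \<noteq> b" "x \<noteq> y"
  shows "gamma V k a b w u = gamma V k x y w u"
proof -
  obtain q where "q permutes V" "q a = x" "q b = y"
    using permutes_map_pair[OF assms] .
  then show ?thesis
    using gamma_conj_invariant[of q V a b k w u] assms by simp
qed

section \<open>Embedding the cube into the symmetric group\<close>

text \<open>The product of the transpositions \<open>(2j+1 2j+2)\<close> over those \<open>j < m\<close> with \<open>\<epsilon> j\<close>.\<close>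
definition cube_perm :: "nat \<Rightarrow> (nat \<Rightarrow> bool) \<Rightarrow> nat \<Rightarrow> nat" where
  "cube_perm m \<epsilon> z =
     (if 1 \<le> z \<and> z \<le> 2 * m \<and> \<epsilon> ((z - 1) div 2) then (if odd z then z + 1 else z - 1) else z)"

lemma cube_perm_cong: "\<epsilon> ((z - 1) div 2) = \<epsilon>' ((z - 1) div 2) \<Longrightarrow> cube_perm m \<epsilon> z = cube_perm m \<epsilon>' z"
  by (simp add: cube_perm_def)

lemma cube_perm_involutory: "cube_perm m \<epsilon> (cube_perm m \<epsilon> z) = z"
proof (cases "1 \<le> z \<and> z \<le> 2 * m \<and> \<epsilon> ((z - 1) div 2)")
  case True
  show ?thesis
  proof (cases "odd z")
    case odd: True
    have "1 \<le> z" "z \<le> 2 * m" using True by auto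
    with odd have "1 \<le> z + 1 \<and> z + 1 \<le> 2 * m \<and> (z + 1 - 1) div 2 = (z - 1) div 2 \<and> even (z + 1)"
      by presburger
    then show ?thesis using True odd by (simp add: cube_perm_def)
  next
    case even: False
    have "1 \<le> z" "z \<le> 2 * m" using True by auto
    with even have "1 \<le> z - 1 \<and> z - 1 \<le> 2 * m \<and> (z - 1 - 1) div 2 = (z - 1) div 2 \<and> odd (z - 1)"
      by presburger
    then show ?thesis using True even by (simp add: cube_perm_def)
  qed
next
  case False
  then have "cube_perm m \<epsilon> z = z"
    unfolding cube_perm_def by auto
  then show ?thesis by simp
qed

lemma cube_perm_permutes:
  assumes "2 * m \<le> n"
  shows "cube_perm m \<epsilon> permutes {1..n}"
  unfolding permutes_def
proof (intro conjI allI impI)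
  fix z :: nat assume "z \<notin> {1..n}"
  then show "cube_perm m \<epsilon> z = z" using assms by (auto simp: cube_perm_def)
next
  fix z :: nat
  show "\<exists>!z'. cube_perm m \<epsilon> z' = z" by (metis cube_perm_involutory)
qed

lemma cube_perm_flip:
  assumes "j < m"
  shows "cube_perm m (flip j \<epsilon>) = cube_perm m \<epsilon> \<circ> transpose (2 * j + 1) (2 * j + 2)"
proof
  fix z
  show "cube_perm m (flip j \<epsilon>) z = (cube_perm m \<epsilon> \<circ> transpose (2 * j + 1) (2 * j + 2)) z"
  proof (cases "z = 2 * j + 1 \<or> z = 2 * j + 2")
    case True
    have "(2 * j + 1 - 1) div 2 = j" "(2 * j + 2 - 1) div 2 = j"
      by presburger+
    with True assms show ?thesis
      by (cases "\<epsilon> j") (auto simp: cube_perm_def flip_def)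
  next
    case False
    then have "z = 0 \<or> (z - 1) div 2 \<noteq> j"
      by presburger
    then have "cube_perm m (flip j \<epsilon>) z = cube_perm m \<epsilon> z"
      by (auto simp: cube_perm_def flip_def)
    with False show ?thesis
      by simp
  qed
qed

lemma degree_le_perm_corr:
  assumes "finite V"
  shows "degree_le k (\<lambda>\<epsilon>. perm_corr V k w u (q \<circ> cube_perm m \<epsilon> \<circ> r))"
proof -
  let ?J = "\<lambda>e. (\<lambda>z. (z - 1) div 2) ` r ` e"
  have fin: "finite e" if "e \<in> ksubsets V k" for e
    using that assms by (auto simp: ksubsets_def intro: finite_subset)
  have card: "card (?J e) \<le> k" if "e \<in> ksubsets V k" for e
  proof -
    have "card (?J e) \<le> card (r ` e)"
      using fin[OF that] by (intro card_image_le) simp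
    also have "\<dots> \<le> card e"
      using fin[OF that] by (rule card_image_le)
    finally show ?thesis
      using that by (simp add: ksubsets_def)
  qed
  have "depends_only_on (?J e) (\<lambda>\<epsilon>. w ((q \<circ> cube_perm m \<epsilon> \<circ> r) ` e) * u e)" for e
  proof (unfold depends_only_on_def, intro allI impI)
    fix \<epsilon> \<epsilon>' :: "nat \<Rightarrow> bool" assume agree: "\<forall>j\<in>?J e. \<epsilon> j = \<epsilon>' j"
    have "(q \<circ> cube_perm m \<epsilon> \<circ> r) z = (q \<circ> cube_perm m \<epsilon>' \<circ> r) z" if "z \<in> e" for z
    proof -
      have "(r z - 1) div 2 \<in> ?J e"
        using that by simp
      then have "\<epsilon> ((r z - 1) div 2) = \<epsilon>' ((r z - 1) div 2)"
        using agree by blast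
      then show ?thesis
        using cube_perm_cong[of \<epsilon> "r z" \<epsilon>' m] by simp
    qed
    then have "(q \<circ> cube_perm m \<epsilon> \<circ> r) ` e = (q \<circ> cube_perm m \<epsilon>' \<circ> r) ` e"
      by (rule image_cong[OF refl])
    then show "w ((q \<circ> cube_perm m \<epsilon> \<circ> r) ` e) * u e = w ((q \<circ> cube_perm m \<epsilon>' \<circ> r) ` e) * u e"
      by simp
  qed
  then show ?thesis
    unfolding perm_corr_def inner_k_def using fin card
    by (intro degree_le_sum[where J="?J"]) (simp_all add: finite_ksubsets assms)
qed

lemma avg_edge_perm_corr_eq_gamma:
  assumes "2 * m \<le> n" "j < m" "x \<in> {1..n}" "y \<in> {1..n}" "x \<noteq> y"
  shows "avg (perms {1..n}) (\<lambda>q. avg (perms {1..n}) (\<lambda>r.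
           \<bar>perm_corr {1..n} k w u (q \<circ> cube_perm m \<epsilon> \<circ> r)
            - perm_corr {1..n} k w u (q \<circ> cube_perm m (flip j \<epsilon>) \<circ> r)\<bar>))
         = gamma {1..n} k x y w u"
proof -
  let ?Y = "perm_corr {1..n} k w u" and ?\<tau> = "transpose (2 * j + 1) (2 * j + 2)"
  have "avg (perms {1..n}) (\<lambda>q. avg (perms {1..n}) (\<lambda>r.
          \<bar>?Y (q \<circ> cube_perm m \<epsilon> \<circ> r) - ?Y (q \<circ> cube_perm m (flip j \<epsilon>) \<circ> r)\<bar>))
      = avg (perms {1..n}) (\<lambda>q. (\<lambda>q. avg (perms {1..n}) (\<lambda>r. \<bar>?Y (q \<circ> r) - ?Y (q \<circ> ?\<tau> \<circ> r)\<bar>))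
          (q \<circ> cube_perm m \<epsilon>))"
    using assms(2) by (simp add: cube_perm_flip o_assoc)
  also have "\<dots> = avg (perms {1..n}) (\<lambda>q. avg (perms {1..n}) (\<lambda>r. \<bar>?Y (q \<circ> r) - ?Y (q \<circ> ?\<tau> \<circ> r)\<bar>))"
    by (rule avg_perms_compose_right[OF cube_perm_permutes[OF assms(1)]])
  also have "\<dots> = gamma {1..n} k (2 * j + 1) (2 * j + 2) w u"
    using assms(1,2) by (simp add: gamma_eq_avg_perm_corr)
  also have "\<dots> = gamma {1..n} k x y w u"
    using assms by (intro gamma_independent) auto
  finally show ?thesis .
qed

lemma avg_abs_perm_corr_cube_perm:
  assumes "2 * m \<le> n"
  shows "avg (perms {1..n}) (\<lambda>q. avg (perms {1..n}) (\<lambda>r.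
           \<bar>perm_corr {1..n} k w u (q \<circ> cube_perm m \<epsilon> \<circ> r)\<bar>))
         = avg (perms {1..n}) (\<lambda>p. \<bar>perm_corr {1..n} k w u p\<bar>)"
proof -
  let ?P = "perms {1..n}" and ?Y = "perm_corr {1..n} k w u"
  have fin: "finite ?P"
    by (simp add: perms_def finite_permutations)
  have nonempty: "?P \<noteq> {}"
    unfolding perms_def using permutes_id by blast
  have "avg ?P (\<lambda>q. avg ?P (\<lambda>r. \<bar>?Y (q \<circ> cube_perm m \<epsilon> \<circ> r)\<bar>))
      = avg ?P (\<lambda>q. avg ?P (\<lambda>r. \<bar>?Y (q \<circ> r)\<bar>))"
    by (rule avg_perms_compose_right[OF cube_perm_permutes[OF assms]])
  also have "\<dots> = avg ?P (\<lambda>_. avg ?P (\<lambda>p. \<bar>?Y p\<bar>))"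
    by (intro avg_cong avg_perms_compose_left) (simp add: perms_def)
  also have "\<dots> = avg ?P (\<lambda>p. \<bar>?Y p\<bar>)"
    by (rule avg_const[OF fin nonempty])
  finally show ?thesis .
qed

lemma gamma_le_avg_abs_perm_corr:
  assumes "2 * m \<le> n" "x \<in> {1..n}" "y \<in> {1..n}" "x \<noteq> y"
  shows "real m * gamma {1..n} k x y w u
           \<le> 2 * 3 ^ k * sqrt (real k * real m) * avg (perms {1..n}) (\<lambda>p. \<bar>perm_corr {1..n} k w u p\<bar>)"
proof -
  let ?P = "perms {1..n}" and ?Y = "perm_corr {1..n} k w u"
  define C where "C = 2 * 3 ^ k * sqrt (real k * real m)"
  have edge: "(\<Sum>j<m. \<Sum>\<epsilon>\<in>cube m. \<bar>?Y (q \<circ> cube_perm m \<epsilon> \<circ> r) - ?Y (q \<circ> cube_perm m (flip j \<epsilon>) \<circ> r)\<bar>)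
      \<le> C * (\<Sum>\<epsilon>\<in>cube m. \<bar>?Y (q \<circ> cube_perm m \<epsilon> \<circ> r)\<bar>)" for q r
    unfolding C_def
    by (rule sum_abs_flip_diff_le[where f="\<lambda>\<epsilon>. ?Y (q \<circ> cube_perm m \<epsilon> \<circ> r)"])
      (simp add: degree_le_perm_corr)
  have "real m * 2 ^ m * gamma {1..n} k x y w u = (\<Sum>j<m. \<Sum>\<epsilon>\<in>cube m. gamma {1..n} k x y w u)"
    by (simp add: card_cube)
  also have "\<dots> = (\<Sum>j<m. \<Sum>\<epsilon>\<in>cube m. avg ?P (\<lambda>q. avg ?P (\<lambda>r.
          \<bar>?Y (q \<circ> cube_perm m \<epsilon> \<circ> r) - ?Y (q \<circ> cube_perm m (flip j \<epsilon>) \<circ> r)\<bar>)))"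
    using avg_edge_perm_corr_eq_gamma[OF assms(1) _ assms(2-4)] by (intro sum.cong) auto
  also have "\<dots> = avg ?P (\<lambda>q. avg ?P (\<lambda>r. \<Sum>j<m. \<Sum>\<epsilon>\<in>cube m.
          \<bar>?Y (q \<circ> cube_perm m \<epsilon> \<circ> r) - ?Y (q \<circ> cube_perm m (flip j \<epsilon>) \<circ> r)\<bar>))"
    by (simp add: avg_sum)
  also have "\<dots> \<le> avg ?P (\<lambda>q. avg ?P (\<lambda>r. C * (\<Sum>\<epsilon>\<in>cube m. \<bar>?Y (q \<circ> cube_perm m \<epsilon> \<circ> r)\<bar>)))"
    by (intro avg_mono edge)
  also have "\<dots> = C * (\<Sum>\<epsilon>\<in>cube m. avg ?P (\<lambda>q. avg ?P (\<lambda>r. \<bar>?Y (q \<circ> cube_perm m \<epsilon> \<circ> r)\<bar>)))"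
    by (simp add: avg_sum avg_mult_left)
  also have "\<dots> = 2 ^ m * (C * avg ?P (\<lambda>p. \<bar>?Y p\<bar>))"
    using avg_abs_perm_corr_cube_perm[OF assms(1)] by (simp add: card_cube)
  finally show ?thesis
    by (simp add: C_def ac_simps)
qed

lemma gamma_sqrt_le_avg_abs_inner_k:
  assumes "x \<in> {1..n}" "y \<in> {1..n}" "x \<noteq> y"
  shows "gamma {1..n} k x y w u * sqrt (real n)
           \<le> 4 * 3 ^ k * sqrt (real k) * avg (perms {1..n}) (\<lambda>p. \<bar>inner_k {1..n} k (perm_act p w) u\<bar>)"
proof -
  define m where "m = n div 2"
  define A where "A = avg (perms {1..n}) (\<lambda>p. \<bar>perm_corr {1..n} k w u p\<bar>)"
  let ?\<gamma> = "gamma {1..n} k x y w u"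
  have m: "1 \<le> m" "2 * m \<le> n" "real n \<le> 4 * real m"
    using assms by (auto simp: m_def)
  have "sqrt (real m) * (sqrt (real m) * ?\<gamma>) = real m * ?\<gamma>"
    by (simp flip: mult.assoc)
  also have "\<dots> \<le> sqrt (real m) * (2 * 3 ^ k * sqrt (real k) * A)"
    using gamma_le_avg_abs_perm_corr[OF m(2) assms] by (simp add: A_def real_sqrt_mult ac_simps)
  finally have "sqrt (real m) * ?\<gamma> \<le> 2 * 3 ^ k * sqrt (real k) * A"
    using m(1) by simp
  have "?\<gamma> * sqrt (real n) \<le> ?\<gamma> * (2 * sqrt (real m))"
    using real_sqrt_le_mono[OF m(3)]
    by (intro mult_left_mono) (simp_all add: real_sqrt_mult gamma_nonneg)
  also have "\<dots> \<le> 2 * (2 * 3 ^ k * sqrt (real k) * A)"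
    using mult_left_mono[OF \<open>sqrt (real m) * ?\<gamma> \<le> 2 * 3 ^ k * sqrt (real k) * A\<close>, of 2]
    by (simp add: ac_simps)
  finally have "?\<gamma> * sqrt (real n) \<le> 4 * 3 ^ k * sqrt (real k) * A"
    by simp
  then show ?thesis
    by (simp add: A_def avg_abs_inner_k_perm_act)
qed

theorem lemma4p2:
  fixes k :: nat
  assumes "k \<ge> 1"
  shows "\<exists>c>0. \<forall>n::nat. \<forall>w u :: nat set \<Rightarrow> real. \<forall>x y.
           n \<ge> k \<longrightarrow> x \<in> {1..n} \<longrightarrow> y \<in> {1..n} \<longrightarrow> x \<noteq> y \<longrightarrow>
           avg (perms {1..n}) (\<lambda>p. \<bar>inner_k {1..n} k (perm_act p w) u\<bar>)
             \<ge> c * gamma {1..n} k x y w u * sqrt (real n)"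
proof (intro exI conjI allI impI)
  let ?C = "4 * 3 ^ k * sqrt (real k)"
  show "1 / ?C > 0"
    using assms by simp
  fix n x y :: nat and w u :: "nat set \<Rightarrow> real"
  assume "x \<in> {1..n}" "y \<in> {1..n}" "x \<noteq> y"
  then have "gamma {1..n} k x y w u * sqrt (real n)
      \<le> ?C * avg (perms {1..n}) (\<lambda>p. \<bar>inner_k {1..n} k (perm_act p w) u\<bar>)"
    by (rule gamma_sqrt_le_avg_abs_inner_k)
  then show "1 / ?C * gamma {1..n} k x y w u * sqrt (real n)
      \<le> avg (perms {1..n}) (\<lambda>p. \<bar>inner_k {1..n} k (perm_act p w) u\<bar>)"
    using assms by (simp add: field_simps)
qed

end
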